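(* Let $(D,\mu,\alpha)$ be a Hom-associative algebra over a field $k$ and let $T:D\otimes D\to D\otimes D$ be a linear map. Assume there exist linear maps $\tilde T_1,\tilde T_2:D\otimes D\otimes D\to D\otimes D\otimes D$ such that $(\alpha\otimes\alpha)\circ T=T\circ(\alpha\otimes\alpha)$, $T\circ(\alpha\otimes\mu)=(\alpha\otimes\mu)\circ\tilde T_1\circ(T\otimes \mathrm{id}_D)$, $T\circ(\mu\otimes\alpha)=(\mu\otimes\alpha)\circ\tilde T_2\circ(\mathrm{id}_D\otimes T)$, $\tilde T_1\circ(T\otimes \mathrm{id}_D)\circ(\mathrm{id}_D\otimes T)=\tilde T_2\circ(\mathrm{id}_D\otimes T)\circ(T\otimes \mathrm{id}_D)$. Then $(D,\mu\circ T,\alpha)$ is also a Hom-associative algebra.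
   Context: All algebras are over a field $k$ and are not assumed unital. A Hom-associative algebra is a triple $(A,\mu,\alpha)$ with $A$ a vector space and $\mu:A\otimes A\to A$ (written $\mu(a\otimes a')=aa'$), $\alpha:A\to A$ linear maps such that $\alpha(aa')=\alpha(a)\alpha(a')$ and $\alpha(a)(a'a'')=(aa')\alpha(a'')$ for all $a,a',a''\in A$. Such a $T$ is called a Hom-pseudotwistor with companions $\tilde T_1,\tilde T_2$. *)

theory Defs
  imports Complex_Main "HOL-Library.Poly_Mapping"
begin

(* Model: a k-vector space D is represented (up to isomorphism) as the space of
finitely supported functions 'b \<Rightarrow>_0 'k on a basis 'b. Then D \<otimes> D is
('b \<times> 'b) \<Rightarrow>_0 'k and D \<otimes> D \<otimes> D is ('b \<times> 'b \<times> 'b) \<Rightarrow>_0 'k. *)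

definition smul :: "'k::field \<Rightarrow> ('i \<Rightarrow>\<^sub>0 'k) \<Rightarrow> ('i \<Rightarrow>\<^sub>0 'k)" where
  "smul c u = Poly_Mapping.map (\<lambda>x. c * x) u"

definition lext :: "('i \<Rightarrow> ('j \<Rightarrow>\<^sub>0 'k::field)) \<Rightarrow> ('i \<Rightarrow>\<^sub>0 'k) \<Rightarrow> ('j \<Rightarrow>\<^sub>0 'k)" where
  "lext g u = (\<Sum>i\<in>Poly_Mapping.keys u. smul (Poly_Mapping.lookup u i) (g i))"

definition bvec :: "'i \<Rightarrow> ('i \<Rightarrow>\<^sub>0 'k::field)" where
  "bvec i = Poly_Mapping.single i 1"

definition tens :: "('i \<Rightarrow>\<^sub>0 'k::field) \<Rightarrow> ('j \<Rightarrow>\<^sub>0 'k) \<Rightarrow> (('i \<times> 'j) \<Rightarrow>\<^sub>0 'k)" where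
  "tens x y = (\<Sum>i\<in>Poly_Mapping.keys x. \<Sum>j\<in>Poly_Mapping.keys y. Poly_Mapping.single (i, j) (Poly_Mapping.lookup x i * Poly_Mapping.lookup y j))"

definition tens3l :: "(('i \<times> 'i) \<Rightarrow>\<^sub>0 'k::field) \<Rightarrow> ('i \<Rightarrow>\<^sub>0 'k) \<Rightarrow> (('i \<times> 'i \<times> 'i) \<Rightarrow>\<^sub>0 'k)" where
  "tens3l u z = (\<Sum>pq\<in>Poly_Mapping.keys u. \<Sum>r\<in>Poly_Mapping.keys z.
      Poly_Mapping.single (fst pq, snd pq, r) (Poly_Mapping.lookup u pq * Poly_Mapping.lookup z r))"

definition bilinear_map :: "(('b \<Rightarrow>\<^sub>0 'k::field) \<Rightarrow> ('b \<Rightarrow>\<^sub>0 'k) \<Rightarrow> ('b \<Rightarrow>\<^sub>0 'k)) \<Rightarrow> bool" where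
  "bilinear_map m \<longleftrightarrow> (\<forall>a. Vector_Spaces.linear smul smul (m a)) \<and>
                       (\<forall>b. Vector_Spaces.linear smul smul (\<lambda>a. m a b))"

definition hom_assoc :: "(('b \<Rightarrow>\<^sub>0 'k::field) \<Rightarrow> ('b \<Rightarrow>\<^sub>0 'k) \<Rightarrow> ('b \<Rightarrow>\<^sub>0 'k))
    \<Rightarrow> (('b \<Rightarrow>\<^sub>0 'k) \<Rightarrow> ('b \<Rightarrow>\<^sub>0 'k)) \<Rightarrow> bool" where
  "hom_assoc m \<alpha> \<longleftrightarrow> bilinear_map m \<and> Vector_Spaces.linear smul smul \<alpha> \<and>
     (\<forall>a b. \<alpha> (m a b) = m (\<alpha> a) (\<alpha> b)) \<and>
     (\<forall>a b c. m (\<alpha> a) (m b c) = m (m a b) (\<alpha> c))"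

definition mu2 :: "(('b \<Rightarrow>\<^sub>0 'k::field) \<Rightarrow> ('b \<Rightarrow>\<^sub>0 'k) \<Rightarrow> ('b \<Rightarrow>\<^sub>0 'k))
    \<Rightarrow> (('b \<times> 'b) \<Rightarrow>\<^sub>0 'k) \<Rightarrow> ('b \<Rightarrow>\<^sub>0 'k)" where
  "mu2 m = lext (\<lambda>(i, j). m (bvec i) (bvec j))"

definition tmap2 :: "(('b \<Rightarrow>\<^sub>0 'k::field) \<Rightarrow> ('b \<Rightarrow>\<^sub>0 'k)) \<Rightarrow> (('b \<Rightarrow>\<^sub>0 'k) \<Rightarrow> ('b \<Rightarrow>\<^sub>0 'k))
    \<Rightarrow> (('b \<times> 'b) \<Rightarrow>\<^sub>0 'k) \<Rightarrow> (('b \<times> 'b) \<Rightarrow>\<^sub>0 'k)" where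
  "tmap2 f g = lext (\<lambda>(i, j). tens (f (bvec i)) (g (bvec j)))"

definition alpha_mu :: "(('b \<Rightarrow>\<^sub>0 'k::field) \<Rightarrow> ('b \<Rightarrow>\<^sub>0 'k))
    \<Rightarrow> (('b \<Rightarrow>\<^sub>0 'k) \<Rightarrow> ('b \<Rightarrow>\<^sub>0 'k) \<Rightarrow> ('b \<Rightarrow>\<^sub>0 'k))
    \<Rightarrow> (('b \<times> 'b \<times> 'b) \<Rightarrow>\<^sub>0 'k) \<Rightarrow> (('b \<times> 'b) \<Rightarrow>\<^sub>0 'k)" where
  "alpha_mu \<alpha> m = lext (\<lambda>(i, j, l). tens (\<alpha> (bvec i)) (m (bvec j) (bvec l)))"

definition mu_alpha :: "(('b \<Rightarrow>\<^sub>0 'k::field) \<Rightarrow> ('b \<Rightarrow>\<^sub>0 'k) \<Rightarrow> ('b \<Rightarrow>\<^sub>0 'k))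
    \<Rightarrow> (('b \<Rightarrow>\<^sub>0 'k) \<Rightarrow> ('b \<Rightarrow>\<^sub>0 'k))
    \<Rightarrow> (('b \<times> 'b \<times> 'b) \<Rightarrow>\<^sub>0 'k) \<Rightarrow> (('b \<times> 'b) \<Rightarrow>\<^sub>0 'k)" where
  "mu_alpha m \<alpha> = lext (\<lambda>(i, j, l). tens (m (bvec i) (bvec j)) (\<alpha> (bvec l)))"

definition T_id :: "((('b \<times> 'b) \<Rightarrow>\<^sub>0 'k::field) \<Rightarrow> (('b \<times> 'b) \<Rightarrow>\<^sub>0 'k))
    \<Rightarrow> (('b \<times> 'b \<times> 'b) \<Rightarrow>\<^sub>0 'k) \<Rightarrow> (('b \<times> 'b \<times> 'b) \<Rightarrow>\<^sub>0 'k)" where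
  "T_id T = lext (\<lambda>(i, j, l). tens3l (T (bvec (i, j))) (bvec l))"

definition id_T :: "((('b \<times> 'b) \<Rightarrow>\<^sub>0 'k::field) \<Rightarrow> (('b \<times> 'b) \<Rightarrow>\<^sub>0 'k))
    \<Rightarrow> (('b \<times> 'b \<times> 'b) \<Rightarrow>\<^sub>0 'k) \<Rightarrow> (('b \<times> 'b \<times> 'b) \<Rightarrow>\<^sub>0 'k)" where
  "id_T T = lext (\<lambda>(i, j, l). tens (bvec i) (T (bvec (j, l))))"

end

theory Submission
  imports Defs
begin

text \<open>All maps involved are linear, so every identity between them may be checked on pure
  tensors, and there the Hom-pseudotwistor axioms can be chained directly.  Multiplicativity:
  \<open>\<alpha> \<circ> \<mu> \<circ> T = \<mu> \<circ> (\<alpha> \<otimes> \<alpha>) \<circ> T = \<mu> \<circ> T \<circ> (\<alpha> \<otimes> \<alpha>)\<close>.  Hom-associativity: on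
  \<open>a \<otimes> b \<otimes> c\<close>, the product \<open>\<alpha>(a) \<cdot> (b \<cdot> c)\<close> for \<open>\<cdot> = \<mu> \<circ> T\<close> equals
  \<open>\<mu> T (\<alpha> \<otimes> \<mu>) (id \<otimes> T)\<close>; the first companion identity moves \<open>T\<close> to the right, the
  braid-type identity exchanges \<open>T\<^sub>1 (T \<otimes> id) (id \<otimes> T)\<close> for \<open>T\<^sub>2 (id \<otimes> T) (T \<otimes> id)\<close>,
  Hom-associativity of \<open>\<mu>\<close> replaces \<open>\<mu> (\<alpha> \<otimes> \<mu>)\<close> by \<open>\<mu> (\<mu> \<otimes> \<alpha>)\<close>, and the second
  companion identity moves \<open>T\<close> back, giving \<open>(a \<cdot> b) \<cdot> \<alpha>(c)\<close>.\<close>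

section \<open>Linear algebra of finitely supported functions\<close>

lemma lookup_smul [simp]: "Poly_Mapping.lookup (smul c u) i = c * Poly_Mapping.lookup u i"
  unfolding smul_def by (simp add: Poly_Mapping.map.rep_eq when_def)

lemma smul_one [simp]: "smul 1 u = u"
  by (rule poly_mapping_eqI) simp

lemma smul_zero_left [simp]: "smul 0 u = 0"
  by (rule poly_mapping_eqI) simp

lemma smul_smul: "smul c (smul a u) = smul (c * a) u"
  by (rule poly_mapping_eqI) (simp add: algebra_simps)

lemma smul_add_left: "smul (a + b) u = smul a u + smul b u"
  by (rule poly_mapping_eqI) (simp add: lookup_add algebra_simps)

lemma smul_sum: "smul c (sum g S) = (\<Sum>x\<in>S. smul c (g x))"
  by (rule poly_mapping_eqI) (simp add: lookup_sum sum_distrib_left)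

lemma vector_space_smul: "vector_space (smul :: 'k::field \<Rightarrow> ('i \<Rightarrow>\<^sub>0 'k) \<Rightarrow> _)"
  by unfold_locales (auto intro!: poly_mapping_eqI simp: lookup_add algebra_simps)

lemma linear_smulI:
  fixes f :: "('i \<Rightarrow>\<^sub>0 'k::field) \<Rightarrow> ('j \<Rightarrow>\<^sub>0 'k)"
  assumes "\<And>x y. f (x + y) = f x + f y" and "\<And>c x. f (smul c x) = smul c (f x)"
  shows "Vector_Spaces.linear smul smul f"
  using assms vector_space_smul[where 'i='i and 'k='k] vector_space_smul[where 'i='j and 'k='k]
  by (simp add: Vector_Spaces.linear_iff)

lemma linear_smul_compose:
  fixes f :: "('i \<Rightarrow>\<^sub>0 'k::field) \<Rightarrow> ('j \<Rightarrow>\<^sub>0 'k)" and g :: "('j \<Rightarrow>\<^sub>0 'k) \<Rightarrow> ('l \<Rightarrow>\<^sub>0 'k)"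
  assumes "Vector_Spaces.linear smul smul f" and "Vector_Spaces.linear smul smul g"
  shows "Vector_Spaces.linear smul smul (\<lambda>x. g (f x))"
  using Vector_Spaces.linear_compose[OF assms] by (simp add: comp_def)

lemma lookup_bvec: "Poly_Mapping.lookup (bvec i) j = (if i = j then 1 else 0)"
  by (simp add: bvec_def lookup_single when_def)

lemma smul_bvec: "smul c (bvec i) = Poly_Mapping.single i c"
  by (rule poly_mapping_eqI) (simp add: bvec_def lookup_single when_def)

lemma sum_keys_smul_bvec: "(\<Sum>i\<in>Poly_Mapping.keys u. smul (Poly_Mapping.lookup u i) (bvec i)) = u"
  by (rule poly_mapping_eqI) (simp add: lookup_sum smul_bvec lookup_single when_def in_keys_iff)

lemma lext_bvec [simp]: "lext g (bvec i) = g i"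
  by (simp add: lext_def bvec_def)

lemma lext_eq_sum_superset:
  assumes "finite S" and "Poly_Mapping.keys u \<subseteq> S"
  shows "lext g u = (\<Sum>i\<in>S. smul (Poly_Mapping.lookup u i) (g i))"
  unfolding lext_def
  by (rule sum.mono_neutral_left) (use assms in \<open>auto simp: in_keys_iff\<close>)

lemma linear_lext: "Vector_Spaces.linear smul smul (lext (g :: 'i \<Rightarrow> ('j \<Rightarrow>\<^sub>0 'k::field)))"
proof (rule linear_smulI)
  fix x y :: "'i \<Rightarrow>\<^sub>0 'k"
  let ?S = "Poly_Mapping.keys x \<union> Poly_Mapping.keys y"
  have "lext g (x + y) = (\<Sum>i\<in>?S. smul (Poly_Mapping.lookup (x + y) i) (g i))"
    by (rule lext_eq_sum_superset) (auto simp: keys_add)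
  also have "\<dots> = (\<Sum>i\<in>?S. smul (Poly_Mapping.lookup x i) (g i))
      + (\<Sum>i\<in>?S. smul (Poly_Mapping.lookup y i) (g i))"
    by (simp add: lookup_add smul_add_left sum.distrib)
  also have "\<dots> = lext g x + lext g y"
    by (subst (1 2) lext_eq_sum_superset[where S = ?S]) auto
  finally show "lext g (x + y) = lext g x + lext g y" .
next
  fix c and x :: "'i \<Rightarrow>\<^sub>0 'k"
  have "lext g (smul c x) = (\<Sum>i\<in>Poly_Mapping.keys x. smul (Poly_Mapping.lookup (smul c x) i) (g i))"
    by (rule lext_eq_sum_superset) (auto simp: in_keys_iff)
  then show "lext g (smul c x) = smul c (lext g x)"
    by (simp add: lext_def smul_sum smul_smul)
qed

lemma linear_eq_lext_bvec:
  fixes f :: "('i \<Rightarrow>\<^sub>0 'k::field) \<Rightarrow> ('j \<Rightarrow>\<^sub>0 'k)"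
  assumes "Vector_Spaces.linear smul smul f"
  shows "f u = lext (\<lambda>i. f (bvec i)) u"
proof -
  have hom: "module_hom smul smul f"
    using assms by (simp add: module_hom_iff_linear)
  have "f u = f (\<Sum>i\<in>Poly_Mapping.keys u. smul (Poly_Mapping.lookup u i) (bvec i))"
    by (simp only: sum_keys_smul_bvec)
  also have "\<dots> = lext (\<lambda>i. f (bvec i)) u"
    by (simp only: lext_def module_hom.sum[OF hom] module_hom.scale[OF hom])
  finally show ?thesis .
qed

lemma linear_eq_on_bvec:
  fixes f g :: "('i \<Rightarrow>\<^sub>0 'k::field) \<Rightarrow> ('j \<Rightarrow>\<^sub>0 'k)"
  assumes "Vector_Spaces.linear smul smul f" and "Vector_Spaces.linear smul smul g"
    and "\<And>i. f (bvec i) = g (bvec i)"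
  shows "f u = g u"
  by (simp only: linear_eq_lext_bvec[OF assms(1), of u] linear_eq_lext_bvec[OF assms(2), of u] assms(3))

lemma bilinear_eq_on_bvec:
  fixes P Q :: "('i \<Rightarrow>\<^sub>0 'k::field) \<Rightarrow> ('j \<Rightarrow>\<^sub>0 'k) \<Rightarrow> ('l \<Rightarrow>\<^sub>0 'k)"
  assumes "\<And>a. Vector_Spaces.linear smul smul (P a)" and "\<And>b. Vector_Spaces.linear smul smul (\<lambda>a. P a b)"
    and "\<And>a. Vector_Spaces.linear smul smul (Q a)" and "\<And>b. Vector_Spaces.linear smul smul (\<lambda>a. Q a b)"
    and "\<And>i j. P (bvec i) (bvec j) = Q (bvec i) (bvec j)"
  shows "P a b = Q a b"
proof -
  have "P a (bvec j) = Q a (bvec j)" for j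
    by (rule linear_eq_on_bvec[OF assms(2,4,5)])
  then show ?thesis
    by (rule linear_eq_on_bvec[OF assms(1,3)])
qed

section \<open>Tensors of basis expansions\<close>

lemma sum_sum_if_eq_pair:
  assumes "finite A" and "finite B"
  shows "(\<Sum>a\<in>A. \<Sum>b\<in>B. if a = p \<and> b = q then c else 0)
    = (if p \<in> A \<and> q \<in> B then c else (0::'c::comm_monoid_add))"
proof -
  have "(\<Sum>a\<in>A. \<Sum>b\<in>B. if a = p \<and> b = q then c else 0)
      = (\<Sum>a\<in>A. if a = p then (\<Sum>b\<in>B. if b = q then c else 0) else 0)"
    by (intro sum.cong refl) auto
  also have "\<dots> = (if p \<in> A \<and> q \<in> B then c else 0)"
    using assms by (simp add: sum.delta)
  finally show ?thesis .
qed

lemma lookup_tens: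
  "Poly_Mapping.lookup (tens x y) k = Poly_Mapping.lookup x (fst k) * Poly_Mapping.lookup y (snd k)"
  by (cases k) (simp add: tens_def lookup_sum lookup_single when_def in_keys_iff if_distrib
      sum_sum_if_eq_pair cong: if_cong conj_cong)

lemma lookup_tens3l:
  "Poly_Mapping.lookup (tens3l u z) (p, q, r) = Poly_Mapping.lookup u (p, q) * Poly_Mapping.lookup z r"
proof -
  have "Poly_Mapping.lookup (tens3l u z) (p, q, r) = (\<Sum>pq\<in>Poly_Mapping.keys u. \<Sum>r'\<in>Poly_Mapping.keys z.
      if pq = (p, q) \<and> r' = r then Poly_Mapping.lookup u (p, q) * Poly_Mapping.lookup z r else 0)"
    unfolding tens3l_def lookup_sum lookup_single when_def
    by (intro sum.cong refl) (auto simp: prod_eq_iff)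
  also have "\<dots> = Poly_Mapping.lookup u (p, q) * Poly_Mapping.lookup z r"
    by (subst sum_sum_if_eq_pair) (auto simp: in_keys_iff)
  finally show ?thesis .
qed

lemma linear_tens_left:
  "Vector_Spaces.linear smul smul (\<lambda>x. tens x (y :: 'j \<Rightarrow>\<^sub>0 'k::field) :: ('i \<times> 'j) \<Rightarrow>\<^sub>0 'k)"
  by (rule linear_smulI; rule poly_mapping_eqI) (auto simp: lookup_tens lookup_add algebra_simps)

lemma linear_tens_right:
  "Vector_Spaces.linear smul smul (\<lambda>y. tens (x :: 'i \<Rightarrow>\<^sub>0 'k::field) y :: ('i \<times> 'j) \<Rightarrow>\<^sub>0 'k)"
  by (rule linear_smulI; rule poly_mapping_eqI) (auto simp: lookup_tens lookup_add algebra_simps)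

lemma linear_tens3l_left: "Vector_Spaces.linear smul smul (\<lambda>u. tens3l u (z :: 'i \<Rightarrow>\<^sub>0 'k::field))"
  by (rule linear_smulI; rule poly_mapping_eqI) (auto simp: lookup_tens3l lookup_add algebra_simps)

lemma linear_tens3l_right: "Vector_Spaces.linear smul smul (\<lambda>z. tens3l u (z :: 'i \<Rightarrow>\<^sub>0 'k::field))"
  by (rule linear_smulI; rule poly_mapping_eqI) (auto simp: lookup_tens3l lookup_add algebra_simps)

lemma tens_bvec_bvec: "tens (bvec i) (bvec j) = (bvec (i, j) :: _ \<Rightarrow>\<^sub>0 'k::field)"
  by (rule poly_mapping_eqI) (auto simp: lookup_tens lookup_bvec)

lemma tens3l_bvec_bvec: "tens3l (bvec (i, j)) (bvec l) = (bvec (i, j, l) :: _ \<Rightarrow>\<^sub>0 'k::field)"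
  by (rule poly_mapping_eqI) (auto simp: lookup_tens3l lookup_bvec split: if_splits)

lemma tens3l_tens: "tens3l (tens a b) c = tens a (tens b c)"
  by (rule poly_mapping_eqI) (auto simp: lookup_tens3l lookup_tens)

lemma linear_mu2: "Vector_Spaces.linear smul smul (mu2 m)"
  unfolding mu2_def by (rule linear_lext)

lemma linear_tmap2: "Vector_Spaces.linear smul smul (tmap2 f g)"
  unfolding tmap2_def by (rule linear_lext)

lemma linear_alpha_mu: "Vector_Spaces.linear smul smul (alpha_mu f m)"
  unfolding alpha_mu_def by (rule linear_lext)

lemma linear_mu_alpha: "Vector_Spaces.linear smul smul (mu_alpha m f)"
  unfolding mu_alpha_def by (rule linear_lext)

lemma linear_T_id: "Vector_Spaces.linear smul smul (T_id T)"
  unfolding T_id_def by (rule linear_lext)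

lemma linear_id_T: "Vector_Spaces.linear smul smul (id_T T)"
  unfolding id_T_def by (rule linear_lext)

lemma mu2_bvec [simp]: "mu2 m (bvec (i, j)) = m (bvec i) (bvec j)"
  by (simp add: mu2_def)

lemma tmap2_bvec [simp]: "tmap2 f g (bvec (i, j)) = tens (f (bvec i)) (g (bvec j))"
  by (simp add: tmap2_def)

lemma alpha_mu_bvec [simp]: "alpha_mu \<alpha> m (bvec (i, j, l)) = tens (\<alpha> (bvec i)) (m (bvec j) (bvec l))"
  by (simp add: alpha_mu_def)

lemma mu_alpha_bvec [simp]: "mu_alpha m \<alpha> (bvec (i, j, l)) = tens (m (bvec i) (bvec j)) (\<alpha> (bvec l))"
  by (simp add: mu_alpha_def)

lemma id_T_bvec [simp]: "id_T T (bvec (i, j, l)) = tens (bvec i) (T (bvec (j, l)))"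
  by (simp add: id_T_def)

lemma T_id_bvec [simp]: "T_id T (bvec (i, j, l)) = tens3l (T (bvec (i, j))) (bvec l)"
  by (simp add: T_id_def)

lemma mu2_tens:
  assumes "bilinear_map m"
  shows "mu2 m (tens a b) = m a b"
proof (rule bilinear_eq_on_bvec[where P = "\<lambda>a b. mu2 m (tens a b)"])
  show "mu2 m (tens (bvec i) (bvec j)) = m (bvec i) (bvec j)" for i j
    by (simp add: tens_bvec_bvec)
qed (use assms in \<open>auto simp: bilinear_map_def
       intro: linear_smul_compose[OF linear_tens_right linear_mu2]
              linear_smul_compose[OF linear_tens_left linear_mu2]\<close>)

lemma tmap2_tens:
  assumes "Vector_Spaces.linear smul smul f" and "Vector_Spaces.linear smul smul g"
  shows "tmap2 f g (tens a b) = tens (f a) (g b)"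
proof (rule bilinear_eq_on_bvec[where P = "\<lambda>a b. tmap2 f g (tens a b)"])
  show "tmap2 f g (tens (bvec i) (bvec j)) = tens (f (bvec i)) (g (bvec j))" for i j
    by (simp add: tens_bvec_bvec)
qed (auto intro: linear_smul_compose[OF linear_tens_right linear_tmap2]
                 linear_smul_compose[OF linear_tens_left linear_tmap2]
                 linear_smul_compose[OF assms(2) linear_tens_right]
                 linear_smul_compose[OF assms(1) linear_tens_left])

lemma alpha_mu_tens:
  assumes "bilinear_map m" and "Vector_Spaces.linear smul smul \<alpha>"
  shows "alpha_mu \<alpha> m (tens a v) = tens (\<alpha> a) (mu2 m v)"
proof (rule bilinear_eq_on_bvec[where P = "\<lambda>a v. alpha_mu \<alpha> m (tens a v)"])
  show "alpha_mu \<alpha> m (tens (bvec i) (bvec jl)) = tens (\<alpha> (bvec i)) (mu2 m (bvec jl))" for i jl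
    by (cases jl) (simp add: tens_bvec_bvec)
qed (auto intro: linear_smul_compose[OF linear_tens_right linear_alpha_mu]
                 linear_smul_compose[OF linear_tens_left linear_alpha_mu]
                 linear_smul_compose[OF linear_mu2 linear_tens_right]
                 linear_smul_compose[OF assms(2) linear_tens_left])

lemma mu_alpha_tens3l:
  assumes "bilinear_map m" and "Vector_Spaces.linear smul smul \<alpha>"
  shows "mu_alpha m \<alpha> (tens3l u c) = tens (mu2 m u) (\<alpha> c)"
proof (rule bilinear_eq_on_bvec[where P = "\<lambda>u c. mu_alpha m \<alpha> (tens3l u c)"])
  show "mu_alpha m \<alpha> (tens3l (bvec ij) (bvec l)) = tens (mu2 m (bvec ij)) (\<alpha> (bvec l))" for ij l
    by (cases ij) (simp add: tens3l_bvec_bvec)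
qed (auto intro: linear_smul_compose[OF linear_tens3l_right linear_mu_alpha]
                 linear_smul_compose[OF linear_tens3l_left linear_mu_alpha]
                 linear_smul_compose[OF assms(2) linear_tens_right]
                 linear_smul_compose[OF linear_mu2 linear_tens_left])

lemma id_T_tens:
  assumes "Vector_Spaces.linear smul smul T"
  shows "id_T T (tens a v) = tens a (T v)"
proof (rule bilinear_eq_on_bvec[where P = "\<lambda>a v. id_T T (tens a v)"])
  show "id_T T (tens (bvec i) (bvec jl)) = tens (bvec i) (T (bvec jl))" for i jl
    by (cases jl) (simp add: tens_bvec_bvec)
qed (auto intro: linear_tens_left
                 linear_smul_compose[OF linear_tens_right linear_id_T]
                 linear_smul_compose[OF linear_tens_left linear_id_T]
                 linear_smul_compose[OF assms linear_tens_right])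

lemma T_id_tens3l:
  assumes "Vector_Spaces.linear smul smul T"
  shows "T_id T (tens3l u c) = tens3l (T u) c"
proof (rule bilinear_eq_on_bvec[where P = "\<lambda>u c. T_id T (tens3l u c)"])
  show "T_id T (tens3l (bvec ij) (bvec l)) = tens3l (T (bvec ij)) (bvec l)" for ij l
    by (cases ij) (simp add: tens3l_bvec_bvec)
qed (auto intro: linear_tens3l_right
                 linear_smul_compose[OF linear_tens3l_right linear_T_id]
                 linear_smul_compose[OF linear_tens3l_left linear_T_id]
                 linear_smul_compose[OF assms linear_tens3l_left])

lemma hom_assoc_mu2_tmap2:
  assumes "hom_assoc m \<alpha>"
  shows "\<alpha> (mu2 m u) = mu2 m (tmap2 \<alpha> \<alpha> u)"
proof (rule linear_eq_on_bvec[where f = "\<lambda>u. \<alpha> (mu2 m u)"])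
  from assms have "bilinear_map m" and lin: "Vector_Spaces.linear smul smul \<alpha>"
    and "\<And>a b. \<alpha> (m a b) = m (\<alpha> a) (\<alpha> b)"
    by (simp_all add: hom_assoc_def)
  then show "\<alpha> (mu2 m (bvec ij)) = mu2 m (tmap2 \<alpha> \<alpha> (bvec ij))" for ij
    by (cases ij) (simp add: mu2_tens)
  show "Vector_Spaces.linear smul smul (\<lambda>u. \<alpha> (mu2 m u))"
    by (rule linear_smul_compose[OF linear_mu2 lin])
qed (rule linear_smul_compose[OF linear_tmap2 linear_mu2])

lemma hom_assoc_mu2_alpha_mu:
  assumes "hom_assoc m \<alpha>"
  shows "mu2 m (alpha_mu \<alpha> m x) = mu2 m (mu_alpha m \<alpha> x)"
proof (rule linear_eq_on_bvec[where f = "\<lambda>x. mu2 m (alpha_mu \<alpha> m x)"])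
  from assms have "bilinear_map m" and "\<And>a b c. m (\<alpha> a) (m b c) = m (m a b) (\<alpha> c)"
    by (simp_all add: hom_assoc_def)
  then show "mu2 m (alpha_mu \<alpha> m (bvec ijl)) = mu2 m (mu_alpha m \<alpha> (bvec ijl))" for ijl
    by (cases ijl) (simp add: mu2_tens)
qed (rule linear_smul_compose[OF linear_alpha_mu linear_mu2] linear_smul_compose[OF linear_mu_alpha linear_mu2])+

section \<open>Twisting by a Hom-pseudotwistor\<close>

lemma bilinear_map_twisted:
  assumes "Vector_Spaces.linear smul smul T"
  shows "bilinear_map (\<lambda>a b. mu2 m (T (tens a b)))"
  unfolding bilinear_map_def
  using linear_smul_compose[OF linear_tens_right linear_smul_compose[OF assms linear_mu2]]
    linear_smul_compose[OF linear_tens_left linear_smul_compose[OF assms linear_mu2]]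
  by blast

lemma twisted_multiplicative:
  assumes HA: "hom_assoc m \<alpha>"
    and comm: "tmap2 \<alpha> \<alpha> \<circ> T = T \<circ> tmap2 \<alpha> \<alpha>"
  shows "\<alpha> (mu2 m (T (tens a b))) = mu2 m (T (tens (\<alpha> a) (\<alpha> b)))"
proof -
  have lin: "Vector_Spaces.linear smul smul \<alpha>"
    using HA by (simp add: hom_assoc_def)
  have "\<alpha> (mu2 m (T (tens a b))) = mu2 m (tmap2 \<alpha> \<alpha> (T (tens a b)))"
    by (rule hom_assoc_mu2_tmap2[OF HA])
  also have "\<dots> = mu2 m (T (tmap2 \<alpha> \<alpha> (tens a b)))"
    using fun_cong[OF comm] by simp
  also have "\<dots> = mu2 m (T (tens (\<alpha> a) (\<alpha> b)))"
    by (simp add: tmap2_tens[OF lin lin])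
  finally show ?thesis .
qed

lemma twisted_hom_associative:
  fixes T1 T2 :: "(('b \<times> 'b \<times> 'b) \<Rightarrow>\<^sub>0 'k::field) \<Rightarrow> (('b \<times> 'b \<times> 'b) \<Rightarrow>\<^sub>0 'k)"
  assumes HA: "hom_assoc m \<alpha>" and linT: "Vector_Spaces.linear smul smul T"
    and left: "T \<circ> alpha_mu \<alpha> m = alpha_mu \<alpha> m \<circ> T1 \<circ> T_id T"
    and right: "T \<circ> mu_alpha m \<alpha> = mu_alpha m \<alpha> \<circ> T2 \<circ> id_T T"
    and braid: "T1 \<circ> T_id T \<circ> id_T T = T2 \<circ> id_T T \<circ> T_id T"
  defines "m' \<equiv> \<lambda>a b. mu2 m (T (tens a b))"
  shows "m' (\<alpha> a) (m' b c) = m' (m' a b) (\<alpha> c)"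
proof -
  have bil: "bilinear_map m" and lin: "Vector_Spaces.linear smul smul \<alpha>"
    using HA by (simp_all add: hom_assoc_def)
  let ?X = "tens a (tens b c)"
  have "m' (\<alpha> a) (m' b c) = mu2 m (T (alpha_mu \<alpha> m (id_T T ?X)))"
    by (simp add: m'_def alpha_mu_tens[OF bil lin] id_T_tens[OF linT])
  also have "\<dots> = mu2 m (alpha_mu \<alpha> m (T1 (T_id T (id_T T ?X))))"
    using fun_cong[OF left] by simp
  also have "\<dots> = mu2 m (alpha_mu \<alpha> m (T2 (id_T T (T_id T ?X))))"
    using fun_cong[OF braid] by simp
  also have "\<dots> = mu2 m (mu_alpha m \<alpha> (T2 (id_T T (T_id T ?X))))"
    by (rule hom_assoc_mu2_alpha_mu[OF HA])
  also have "\<dots> = mu2 m (T (mu_alpha m \<alpha> (T_id T ?X)))"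
    using fun_cong[OF right] by simp
  also have "\<dots> = m' (m' a b) (\<alpha> c)"
    by (simp add: m'_def tens3l_tens[symmetric] T_id_tens3l[OF linT] mu_alpha_tens3l[OF bil lin])
  finally show ?thesis .
qed

theorem proposition2p1:
  fixes m :: "('b \<Rightarrow>\<^sub>0 'k::field) \<Rightarrow> ('b \<Rightarrow>\<^sub>0 'k) \<Rightarrow> ('b \<Rightarrow>\<^sub>0 'k)"
    and \<alpha> :: "('b \<Rightarrow>\<^sub>0 'k) \<Rightarrow> ('b \<Rightarrow>\<^sub>0 'k)"
    and T :: "(('b \<times> 'b) \<Rightarrow>\<^sub>0 'k) \<Rightarrow> (('b \<times> 'b) \<Rightarrow>\<^sub>0 'k)"
  assumes HA: "hom_assoc m \<alpha>"
    and linT: "Vector_Spaces.linear smul smul T"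
    and ex: "\<exists>T1 T2 :: (('b \<times> 'b \<times> 'b) \<Rightarrow>\<^sub>0 'k) \<Rightarrow> (('b \<times> 'b \<times> 'b) \<Rightarrow>\<^sub>0 'k).
       Vector_Spaces.linear smul smul T1 \<and> Vector_Spaces.linear smul smul T2 \<and>
       tmap2 \<alpha> \<alpha> \<circ> T = T \<circ> tmap2 \<alpha> \<alpha> \<and>
       T \<circ> alpha_mu \<alpha> m = alpha_mu \<alpha> m \<circ> T1 \<circ> T_id T \<and>
       T \<circ> mu_alpha m \<alpha> = mu_alpha m \<alpha> \<circ> T2 \<circ> id_T T \<and>
       T1 \<circ> T_id T \<circ> id_T T = T2 \<circ> id_T T \<circ> T_id T"
  shows "hom_assoc (\<lambda>a b. mu2 m (T (tens a b))) \<alpha>"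
proof -
  from ex obtain T1 T2 :: "(('b \<times> 'b \<times> 'b) \<Rightarrow>\<^sub>0 'k) \<Rightarrow> (('b \<times> 'b \<times> 'b) \<Rightarrow>\<^sub>0 'k)" where
    comm: "tmap2 \<alpha> \<alpha> \<circ> T = T \<circ> tmap2 \<alpha> \<alpha>" and
    left: "T \<circ> alpha_mu \<alpha> m = alpha_mu \<alpha> m \<circ> T1 \<circ> T_id T" and
    right: "T \<circ> mu_alpha m \<alpha> = mu_alpha m \<alpha> \<circ> T2 \<circ> id_T T" and
    braid: "T1 \<circ> T_id T \<circ> id_T T = T2 \<circ> id_T T \<circ> T_id T"
    by blast
  have "Vector_Spaces.linear smul smul \<alpha>"
    using HA by (simp add: hom_assoc_def)
  then show ?thesis
    unfolding hom_assoc_def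
    using bilinear_map_twisted[OF linT] twisted_multiplicative[OF HA comm]
      twisted_hom_associative[OF HA linT left right braid]
    by blast
qed

end
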